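(* Let $\mathbb{X}$ be a reflexive Banach space and $\mathbb{Y}$ a finite-dimensional Banach space with $\dim(\mathbb{Y})=m$. Let $T\in\mathbb{L}(\mathbb{X},\mathbb{Y})$ with $\|T\|=1$ be such that $\{x_1,\ldots,x_r\}\subseteq M_T\cap\operatorname{Ext}(B_{\mathbb{X}})\subseteq\operatorname{span}\{x_1,\ldots,x_r\}$, where $\{x_1,\ldots,x_r\}$ is linearly independent. Suppose $Tx_i$ is $m$-smooth for $i=1,\ldots,r$. Then $T$ is $mr$-smooth.
   Context: $\mathbb{L}(\mathbb{X},\mathbb{Y})$ is the space of bounded linear operators with the operator norm. $B_{\mathbb{X}}$ is the closed unit ball, $\operatorname{Ext}(B_{\mathbb{X}})$ its set of extreme points, and $M_T=\{x\in\mathbb{X}:\|x\|=1,\ \|Tx\|=\|T\|\}$. For a Banach space $\mathbb{Z}$ and a unit vector $z$, $J(z)=\{f\in \mathbb{Z}^*:\|f\|=1,\ f(z)=1\}$; $z$ is $k$-smooth if $\dim\operatorname{span} J(z)=k$ (applied in $\mathbb{Y}$ for $Tx_i$ and in $\mathbb{L}(\mathbb{X},\mathbb{Y})$ for $T$). *)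

theory Defs
  imports "HOL-Analysis.Analysis"
begin

definition reflexive_space :: "'a::real_normed_vector itself \<Rightarrow> bool" where
  "reflexive_space (_ :: 'a itself) \<longleftrightarrow>
     (\<forall>\<phi> :: ('a \<Rightarrow>\<^sub>L real) \<Rightarrow>\<^sub>L real. \<exists>x :: 'a. \<forall>f. blinfun_apply \<phi> f = blinfun_apply f x)"

definition supp_fun :: "'z::real_normed_vector \<Rightarrow> ('z \<Rightarrow>\<^sub>L real) set" where
  "supp_fun z = {f. norm f = 1 \<and> blinfun_apply f z = 1}"

definition k_smooth :: "'z::real_normed_vector \<Rightarrow> nat \<Rightarrow> bool" where
  "k_smooth z k \<longleftrightarrow> norm z = 1 \<and>
     (\<exists>B. finite B \<and> span B = span (supp_fun z)) \<and> dim (supp_fun z) = k"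

definition norm_attaining_set :: "('a::real_normed_vector \<Rightarrow>\<^sub>L 'b::real_normed_vector) \<Rightarrow> 'a set" where
  "norm_attaining_set T = {x. norm x = 1 \<and> norm (blinfun_apply T x) = norm T}"

end

theory Submission
  imports Defs
begin

text \<open>Write X for the set of the x i, and let E be a basis of Y with coordinate functionals
  c v. Every f in J(T) vanishes on the rank-one operators g \<otimes> y with g annihilating
  span X: otherwise moving T in the direction g \<otimes> y produces almost norming points on
  which g stays away from 0; weak compactness of the ball (reflexivity) together with weak
  continuity of x \<mapsto> \<parallel>T x\<parallel> (finite-dimensional Y) yields a norm-attaining point off
  span X, and a Krein--Milman argument on the face of the ball it exposes gives a
  norm-attaining extreme point off span X, which is excluded. Hence f is a combination of
  the m r functionals S \<mapsto> c v (S u), u \<in> X, v \<in> E. Conversely each of them lies in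
  span J(T): by m-smoothness J(T u) spans the whole dual of Y, and \<psi> \<mapsto> (S \<mapsto> \<psi> (S u))
  maps J(T u) into J(T). As these m r functionals are linearly independent,
  dim span J(T) = m r.\<close>

section \<open>Hahn--Banach\<close>

text \<open>Partial functionals dominated by C \<parallel>\<cdot>\<parallel> are represented by their graphs, so that Zorn's
  lemma applies to the inclusion order.\<close>

definition dominated_graph :: "real \<Rightarrow> ('a::real_normed_vector \<times> real) set \<Rightarrow> bool" where
  "dominated_graph C G \<longleftrightarrow> (0, 0) \<in> G \<and>
     (\<forall>x a y b. (x, a) \<in> G \<longrightarrow> (y, b) \<in> G \<longrightarrow> (x + y, a + b) \<in> G) \<and>
     (\<forall>x a c. (x, a) \<in> G \<longrightarrow> (c *\<^sub>R x, c * a) \<in> G) \<and>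
     (\<forall>x a b. (x, a) \<in> G \<longrightarrow> (x, b) \<in> G \<longrightarrow> a = b) \<and>
     (\<forall>x a. (x, a) \<in> G \<longrightarrow> a \<le> C * norm x)"

lemma dominated_graphD:
  assumes "dominated_graph C G"
  shows dominated_graph_zero: "(0, 0) \<in> G"
    and dominated_graph_add: "\<And>x a y b. (x, a) \<in> G \<Longrightarrow> (y, b) \<in> G \<Longrightarrow> (x + y, a + b) \<in> G"
    and dominated_graph_scaleR: "\<And>x a c. (x, a) \<in> G \<Longrightarrow> (c *\<^sub>R x, c * a) \<in> G"
    and dominated_graph_unique: "\<And>x a b. (x, a) \<in> G \<Longrightarrow> (x, b) \<in> G \<Longrightarrow> a = b"
    and dominated_graph_bound: "\<And>x a. (x, a) \<in> G \<Longrightarrow> a \<le> C * norm x"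
  using assms unfolding dominated_graph_def by blast+

lemma subspace_fst_dominated_graph:
  assumes "dominated_graph C G"
  shows "subspace (fst ` G)"
  unfolding subspace_def
proof (intro conjI ballI allI)
  show "0 \<in> fst ` G" using dominated_graph_zero[OF assms] by force
  show "x + y \<in> fst ` G" if "x \<in> fst ` G" "y \<in> fst ` G" for x y
    using that dominated_graph_add[OF assms] by force
  show "c *\<^sub>R x \<in> fst ` G" if "x \<in> fst ` G" for c x
    using that dominated_graph_scaleR[OF assms] by force
qed

lemma subspace_add_scaleR_unique:
  assumes "subspace V" "w \<notin> V" "v \<in> V" "v' \<in> V" "v + t *\<^sub>R w = v' + t' *\<^sub>R w"
  shows "t = t'"
proof (rule ccontr)
  assume "t \<noteq> t'"
  have "w = (1 / (t - t')) *\<^sub>R ((t - t') *\<^sub>R w)"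
    using \<open>t \<noteq> t'\<close> by simp
  also have "(t - t') *\<^sub>R w = v' - v"
    using assms(5) by (simp add: algebra_simps)
  finally have "w \<in> V"
    using assms(1,3,4) by (simp add: subspace_diff subspace_scale)
  with assms(2) show False ..
qed

text \<open>The value s at the new direction w is squeezed between the bounds that domination
  imposes at v - w and at v' + w.\<close>

lemma dominated_graph_extension_value:
  assumes G: "dominated_graph C M" and "0 \<le> C"
  obtains s where "\<And>v b. (v, b) \<in> M \<Longrightarrow> b - C * norm (v - w) \<le> s"
    and "\<And>v b. (v, b) \<in> M \<Longrightarrow> s \<le> C * norm (v + w) - b"
proof -
  have key: "b - C * norm (v - w) \<le> C * norm (v' + w) - b'"
    if "(v, b) \<in> M" "(v', b') \<in> M" for v b v' b'
  proof -
    have "b + b' \<le> C * norm (v + v')"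
      using dominated_graph_bound[OF G dominated_graph_add[OF G that]] .
    also have "\<dots> \<le> C * (norm (v - w) + norm (v' + w))"
      using norm_triangle_ineq[of "v - w" "v' + w"] \<open>0 \<le> C\<close> by (simp add: mult_left_mono)
    finally show ?thesis by (simp add: algebra_simps)
  qed
  define S where "S = {b - C * norm (v - w) | v b. (v, b) \<in> M}"
  have "S \<noteq> {}"
    using dominated_graph_zero[OF G] unfolding S_def by blast
  moreover have "bdd_above S"
    unfolding bdd_above_def S_def using key[OF _ dominated_graph_zero[OF G]] by auto
  ultimately show thesis
    using key by (intro that[of "Sup S"] cSup_upper cSup_least) (auto simp: S_def)
qed

lemma dominated_graph_extension_bound:
  assumes G: "dominated_graph C M" and "(u, a) \<in> M"
    and lo: "\<And>v b. (v, b) \<in> M \<Longrightarrow> b - C * norm (v - w) \<le> s"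
    and hi: "\<And>v b. (v, b) \<in> M \<Longrightarrow> s \<le> C * norm (v + w) - b"
  shows "a + t * s \<le> C * norm (u + t *\<^sub>R w)"
proof -
  have scaled: "((1 / \<tau>) *\<^sub>R u, (1 / \<tau>) * a) \<in> M" for \<tau>
    using dominated_graph_scaleR[OF G \<open>(u, a) \<in> M\<close>] .
  consider "t = 0" | "t > 0" | "t < 0" by linarith
  then show ?thesis
  proof cases
    case 1
    then show ?thesis using dominated_graph_bound[OF G \<open>(u, a) \<in> M\<close>] by simp
  next
    case 2
    have "u + t *\<^sub>R w = t *\<^sub>R ((1 / t) *\<^sub>R u + w)"
      using 2 by (simp add: algebra_simps)
    then have eq: "norm (u + t *\<^sub>R w) = t * norm ((1 / t) *\<^sub>R u + w)"
      using 2 by simp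
    have "t * s \<le> t * (C * norm ((1 / t) *\<^sub>R u + w) - (1 / t) * a)"
      using hi[OF scaled] 2 by (simp add: mult_left_mono)
    also have "\<dots> = C * norm (u + t *\<^sub>R w) - a"
      using 2 unfolding eq by (simp add: algebra_simps)
    finally show ?thesis by simp
  next
    case 3
    define \<tau> where "\<tau> = - t"
    have "\<tau> > 0" using 3 \<tau>_def by simp
    have "u + t *\<^sub>R w = \<tau> *\<^sub>R ((1 / \<tau>) *\<^sub>R u - w)"
      using \<open>\<tau> > 0\<close> \<tau>_def by (simp add: algebra_simps)
    then have eq: "norm (u + t *\<^sub>R w) = \<tau> * norm ((1 / \<tau>) *\<^sub>R u - w)"
      using \<open>\<tau> > 0\<close> by simp
    have "\<tau> * ((1 / \<tau>) * a - C * norm ((1 / \<tau>) *\<^sub>R u - w)) \<le> \<tau> * s"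
      using lo[OF scaled] \<open>\<tau> > 0\<close> by (simp add: mult_left_mono)
    then have "a - C * norm (u + t *\<^sub>R w) \<le> \<tau> * s"
      using \<open>\<tau> > 0\<close> unfolding eq by (simp add: algebra_simps)
    then show ?thesis using \<tau>_def by simp
  qed
qed

lemma dominated_graph_extend:
  assumes G: "dominated_graph C M" and w: "w \<notin> fst ` M" and "0 \<le> C"
  shows "\<exists>M'. dominated_graph C M' \<and> M \<subset> M'"
proof -
  obtain s where lo: "\<And>v b. (v, b) \<in> M \<Longrightarrow> b - C * norm (v - w) \<le> s"
    and hi: "\<And>v b. (v, b) \<in> M \<Longrightarrow> s \<le> C * norm (v + w) - b"
    using dominated_graph_extension_value[OF G \<open>0 \<le> C\<close>] by blast
  define M' where "M' = {(u + t *\<^sub>R w, a + t * s) | u a t. (u, a) \<in> M}"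
  have inM': "(u + t *\<^sub>R w, a + t * s) \<in> M'" if "(u, a) \<in> M" for u a t
    unfolding M'_def using that by blast
  have "dominated_graph C M'"
    unfolding dominated_graph_def
  proof (intro conjI allI impI)
    show "(0, 0) \<in> M'" using inM'[OF dominated_graph_zero[OF G], of 0] by simp
  next
    fix x a y b assume "(x, a) \<in> M'" "(y, b) \<in> M'"
    then obtain u1 a1 t1 u2 a2 t2 where "(u1, a1) \<in> M" "(u2, a2) \<in> M"
      "x = u1 + t1 *\<^sub>R w" "a = a1 + t1 * s" "y = u2 + t2 *\<^sub>R w" "b = a2 + t2 * s"
      unfolding M'_def by blast
    then show "(x + y, a + b) \<in> M'"
      using inM'[OF dominated_graph_add[OF G], of u1 a1 u2 a2 "t1 + t2"] by (simp add: algebra_simps)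
  next
    fix x a c assume "(x, a) \<in> M'"
    then obtain u1 a1 t1 where "(u1, a1) \<in> M" "x = u1 + t1 *\<^sub>R w" "a = a1 + t1 * s"
      unfolding M'_def by blast
    then show "(c *\<^sub>R x, c * a) \<in> M'"
      using inM'[OF dominated_graph_scaleR[OF G], of u1 a1 c "c * t1"] by (simp add: algebra_simps)
  next
    fix x a b assume "(x, a) \<in> M'" "(x, b) \<in> M'"
    then obtain u1 a1 t1 u2 a2 t2 where m: "(u1, a1) \<in> M" "(u2, a2) \<in> M"
      "x = u1 + t1 *\<^sub>R w" "a = a1 + t1 * s" "x = u2 + t2 *\<^sub>R w" "b = a2 + t2 * s"
      unfolding M'_def by blast
    then have "t1 = t2"
      using subspace_add_scaleR_unique[OF subspace_fst_dominated_graph[OF G] w] by force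
    with m show "a = b" using dominated_graph_unique[OF G] by auto
  next
    fix x a assume "(x, a) \<in> M'"
    then show "a \<le> C * norm x"
      unfolding M'_def using dominated_graph_extension_bound[OF G _ lo hi] by blast
  qed
  moreover have "M \<subseteq> M'"
    using inM'[of _ _ 0] by auto
  moreover have "(w, s) \<notin> M" "(w, s) \<in> M'"
    using w inM'[OF dominated_graph_zero[OF G], of 1] by force+
  ultimately show ?thesis by blast
qed

lemma dominated_graph_Union_chain:
  assumes "Ch \<noteq> {}" "\<And>G. G \<in> Ch \<Longrightarrow> dominated_graph C G"
    and chain: "\<And>G H. G \<in> Ch \<Longrightarrow> H \<in> Ch \<Longrightarrow> G \<subseteq> H \<or> H \<subseteq> G"
  shows "dominated_graph C (\<Union>Ch)"
proof -
  have two: "\<exists>G\<in>Ch. p \<in> G \<and> q \<in> G" if pq: "p \<in> \<Union>Ch" "q \<in> \<Union>Ch" for p q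
  proof -
    obtain G H where "G \<in> Ch" "H \<in> Ch" "p \<in> G" "q \<in> H"
      using pq by blast
    then show ?thesis using chain[of G H] by blast
  qed
  show ?thesis
    unfolding dominated_graph_def
  proof (intro conjI allI impI)
    show "(0, 0) \<in> \<Union>Ch" using \<open>Ch \<noteq> {}\<close> dominated_graph_zero[OF assms(2)] by blast
  next
    fix x a y b assume "(x, a) \<in> \<Union>Ch" "(y, b) \<in> \<Union>Ch"
    then obtain G where "G \<in> Ch" "(x, a) \<in> G" "(y, b) \<in> G" using two by blast
    then show "(x + y, a + b) \<in> \<Union>Ch" using dominated_graph_add[OF assms(2)[of G]] by blast
  next
    fix x a c assume "(x, a) \<in> \<Union>Ch"
    then obtain G where "G \<in> Ch" "(x, a) \<in> G" by blast
    then show "(c *\<^sub>R x, c * a) \<in> \<Union>Ch" using dominated_graph_scaleR[OF assms(2)[of G]] by blast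
  next
    fix x a b assume "(x, a) \<in> \<Union>Ch" "(x, b) \<in> \<Union>Ch"
    then obtain G where "G \<in> Ch" "(x, a) \<in> G" "(x, b) \<in> G" using two by blast
    then show "a = b" using dominated_graph_unique[OF assms(2)[of G]] by blast
  next
    fix x a assume "(x, a) \<in> \<Union>Ch"
    then obtain G where "G \<in> Ch" "(x, a) \<in> G" by blast
    then show "a \<le> C * norm x" using dominated_graph_bound[OF assms(2)[of G]] by blast
  qed
qed

lemma dominated_graph_total_blinfun:
  assumes G: "dominated_graph C M" and total: "\<And>x. \<exists>a. (x, a) \<in> M" and "0 \<le> C"
  obtains g :: "'a::real_normed_vector \<Rightarrow>\<^sub>L real"
  where "\<And>x a. (x, a) \<in> M \<Longrightarrow> blinfun_apply g x = a" "norm g \<le> C"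
proof -
  define g where "g x = (THE a. (x, a) \<in> M)" for x
  have gM: "(x, g x) \<in> M" for x
    using total[of x] dominated_graph_unique[OF G] unfolding g_def by (metis theI)
  have gval: "(x, a) \<in> M \<Longrightarrow> g x = a" for x a
    using gM dominated_graph_unique[OF G] by blast
  have "linear g"
  proof
    show "g (x + y) = g x + g y" for x y using gval[OF dominated_graph_add[OF G gM gM]] .
    show "g (c *\<^sub>R x) = c *\<^sub>R g x" for c x using gval[OF dominated_graph_scaleR[OF G gM]] by simp
  qed
  moreover have gb: "norm (g x) \<le> C * norm x" for x
    using dominated_graph_bound[OF G gM, of x] dominated_graph_bound[OF G gM, of "-x"]
      linear_neg[OF \<open>linear g\<close>, of x]
    by simp
  ultimately have bl: "bounded_linear g"
    by (intro bounded_linear_intro[where K=C]) (auto simp: linear_add linear_scale mult.commute)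
  show thesis
  proof (rule that[of "Blinfun g"])
    show "blinfun_apply (Blinfun g) x = a" if "(x, a) \<in> M" for x a
      using that gval bounded_linear_Blinfun_apply[OF bl] by simp
    show "norm (Blinfun g) \<le> C"
      using \<open>0 \<le> C\<close> gb by (intro norm_blinfun_bound) (auto simp: bounded_linear_Blinfun_apply[OF bl])
  qed
qed

lemma hahn_banach_graph:
  fixes G0 :: "('a::real_normed_vector \<times> real) set"
  assumes G0: "dominated_graph C G0" and "0 \<le> C"
  obtains g :: "'a \<Rightarrow>\<^sub>L real" where "\<And>x a. (x, a) \<in> G0 \<Longrightarrow> blinfun_apply g x = a" "norm g \<le> C"
proof -
  define A where "A = {G. dominated_graph C G \<and> G0 \<subseteq> G}"
  have "\<exists>M\<in>A. \<forall>G\<in>A. M \<subseteq> G \<longrightarrow> G = M"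
  proof (rule subset_Zorn_nonempty)
    show "A \<noteq> {}" unfolding A_def using G0 by blast
  next
    fix Ch assume "Ch \<noteq> {}" "subset.chain A Ch"
    then have "Ch \<subseteq> A" "\<And>G H. G \<in> Ch \<Longrightarrow> H \<in> Ch \<Longrightarrow> G \<subseteq> H \<or> H \<subseteq> G"
      unfolding subset_chain_def by auto
    then have "dominated_graph C (\<Union>Ch)" "G0 \<subseteq> \<Union>Ch"
      using dominated_graph_Union_chain[OF \<open>Ch \<noteq> {}\<close>] \<open>Ch \<noteq> {}\<close> unfolding A_def by blast+
    then show "\<Union>Ch \<in> A" unfolding A_def by simp
  qed
  then obtain M where "M \<in> A" and maxA: "\<forall>G\<in>A. M \<subseteq> G \<longrightarrow> G = M" ..
  then have M: "dominated_graph C M" "G0 \<subseteq> M"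
    unfolding A_def by auto
  have max: "G = M" if "dominated_graph C G" "M \<subseteq> G" for G
    using maxA that M(2) unfolding A_def by auto
  have "\<exists>a. (x, a) \<in> M" for x
  proof (rule ccontr)
    assume "\<nexists>a. (x, a) \<in> M"
    then have "x \<notin> fst ` M" by force
    then obtain M' where "dominated_graph C M'" "M \<subset> M'"
      using dominated_graph_extend[OF M(1) _ \<open>0 \<le> C\<close>] by blast
    then show False using max[of M'] by blast
  qed
  then obtain g :: "'a \<Rightarrow>\<^sub>L real"
    where "\<And>x a. (x, a) \<in> M \<Longrightarrow> blinfun_apply g x = a" "norm g \<le> C"
    using dominated_graph_total_blinfun[OF M(1) _ \<open>0 \<le> C\<close>] by blast
  with M(2) show thesis
    using that by blast
qed

lemma infdist_subspace_le_norm: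
  assumes "subspace V" "v \<in> V"
  shows "\<bar>t\<bar> * infdist w V \<le> norm (v + t *\<^sub>R w)"
proof (cases "t = 0")
  case False
  have "- (1 / t) *\<^sub>R v \<in> V"
    using assms by (simp add: subspace_neg subspace_scale)
  then have "infdist w V \<le> norm (w + (1 / t) *\<^sub>R v)"
    using infdist_le[of "- (1 / t) *\<^sub>R v" V w] by (simp add: dist_norm)
  then have "\<bar>t\<bar> * infdist w V \<le> norm (t *\<^sub>R (w + (1 / t) *\<^sub>R v))"
    by (simp add: mult_left_mono)
  also have "t *\<^sub>R (w + (1 / t) *\<^sub>R v) = v + t *\<^sub>R w"
    using False by (simp add: algebra_simps)
  finally show ?thesis .
qed simp

lemma dominated_graph_line_over_subspace:
  fixes V :: "'a::real_normed_vector set"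
  assumes V: "subspace V" and "w \<notin> V" and d: "0 < infdist w V"
  shows "dominated_graph (1 / infdist w V) {(v + t *\<^sub>R w, t) | v t. v \<in> V}"
    (is "dominated_graph _ ?G")
  unfolding dominated_graph_def
proof (intro conjI allI impI)
  show "(0, 0) \<in> ?G"
    using subspace_0[OF V] by force
next
  fix x a y b assume "(x, a) \<in> ?G" "(y, b) \<in> ?G"
  then obtain v1 v2 where "v1 \<in> V" "v2 \<in> V" "x = v1 + a *\<^sub>R w" "y = v2 + b *\<^sub>R w"
    by blast
  then show "(x + y, a + b) \<in> ?G"
    using V by (auto simp: algebra_simps intro!: exI[of _ "v1 + v2"] subspace_add)
next
  fix x a c assume "(x, a) \<in> ?G"
  then obtain v1 where "v1 \<in> V" "x = v1 + a *\<^sub>R w" by blast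
  then show "(c *\<^sub>R x, c * a) \<in> ?G"
    using V by (auto simp: algebra_simps intro!: exI[of _ "c *\<^sub>R v1"] subspace_scale)
next
  fix x a b assume "(x, a) \<in> ?G" "(x, b) \<in> ?G"
  then obtain v1 v2 where "v1 \<in> V" "v2 \<in> V" "v1 + a *\<^sub>R w = v2 + b *\<^sub>R w"
    by auto
  then show "a = b" using subspace_add_scaleR_unique[OF V \<open>w \<notin> V\<close>] by blast
next
  fix x a assume "(x, a) \<in> ?G"
  then obtain v1 where "v1 \<in> V" "x = v1 + a *\<^sub>R w" by blast
  then have "\<bar>a\<bar> * infdist w V \<le> norm x"
    using infdist_subspace_le_norm[OF V] by blast
  moreover have "a * infdist w V \<le> \<bar>a\<bar> * infdist w V"
    by (intro mult_right_mono) (use d in auto)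
  ultimately have "a * infdist w V \<le> norm x" by linarith
  then show "a \<le> 1 / infdist w V * norm x"
    using d by (simp add: field_simps)
qed

lemma functional_separating_closed_subspace:
  fixes V :: "'a::real_normed_vector set"
  assumes V: "subspace V" "closed V" and "w \<notin> V"
  obtains g :: "'a \<Rightarrow>\<^sub>L real"
  where "\<And>v. v \<in> V \<Longrightarrow> blinfun_apply g v = 0" "blinfun_apply g w = 1"
    "norm g \<le> 1 / infdist w V"
proof -
  have d: "0 < infdist w V"
    using in_closed_iff_infdist_zero[OF V(2)] subspace_0[OF V(1)] \<open>w \<notin> V\<close> infdist_nonneg[of w V]
    by force
  let ?G = "{(v + t *\<^sub>R w, t) | v t. v \<in> V}"
  obtain g :: "'a \<Rightarrow>\<^sub>L real" where g: "\<And>x a. (x, a) \<in> ?G \<Longrightarrow> blinfun_apply g x = a"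
    "norm g \<le> 1 / infdist w V"
    by (rule hahn_banach_graph[OF dominated_graph_line_over_subspace[OF V(1) \<open>w \<notin> V\<close> d]])
      (use d in auto)
  have line: "(v + t *\<^sub>R w, t) \<in> ?G" if "v \<in> V" for v t
    using that by blast
  show thesis
  proof (rule that)
    show "blinfun_apply g v = 0" if "v \<in> V" for v
      using g(1)[OF line[OF that, of 0]] by simp
    show "blinfun_apply g w = 1"
      using g(1)[OF line[OF subspace_0[OF V(1)], of 1]] by simp
  qed (rule g(2))
qed

lemma exists_norming_functional:
  fixes x :: "'a::real_normed_vector"
  obtains g :: "'a \<Rightarrow>\<^sub>L real" where "norm g \<le> 1" "blinfun_apply g x = norm x"
proof (cases "x = 0")
  case True
  then show thesis using that[of 0] by simp
next
  case False
  then obtain g :: "'a \<Rightarrow>\<^sub>L real" where "blinfun_apply g x = 1" "norm g \<le> 1 / norm x"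
    using functional_separating_closed_subspace[of "{0}" x] subspace_single_0 by auto
  then show thesis
    using False by (intro that[of "norm x *\<^sub>R g"]) (auto simp: field_simps blinfun.scaleR_left)
qed

lemma functionals_separate_points:
  fixes x y :: "'a::real_normed_vector"
  assumes "x \<noteq> y"
  obtains g :: "'a \<Rightarrow>\<^sub>L real" where "blinfun_apply g x \<noteq> blinfun_apply g y"
proof -
  obtain g :: "'a \<Rightarrow>\<^sub>L real" where "blinfun_apply g (x - y) = norm (x - y)"
    using exists_norming_functional by blast
  then have "blinfun_apply g x \<noteq> blinfun_apply g y"
    using assms by (auto simp: blinfun.diff_right)
  then show thesis by (rule that)
qed

lemma closed_span_finite:
  fixes S :: "'a::real_normed_vector set"
  assumes "finite S"
  shows "closed (span S)"
  using assms
proof (induction S rule: finite_induct)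
  case empty
  show ?case by simp
next
  case (insert w S)
  show ?case
  proof (cases "w \<in> span S")
    case True
    then show ?thesis using insert span_redundant by metis
  next
    case False
    obtain g :: "'a \<Rightarrow>\<^sub>L real" where g: "\<And>v. v \<in> span S \<Longrightarrow> blinfun_apply g v = 0"
      "blinfun_apply g w = 1"
      using functional_separating_closed_subspace[OF subspace_span insert.IH False] by blast
    have eq: "span (insert w S) = (\<lambda>z. z - blinfun_apply g z *\<^sub>R w) -` span S"
    proof (intro set_eqI iffI)
      fix z assume "z \<in> span (insert w S)"
      then obtain k where k: "z - k *\<^sub>R w \<in> span S"
        using span_breakdown_eq by blast
      then have "blinfun_apply g (z - k *\<^sub>R w) = 0"
        using g(1) by blast
      then have "blinfun_apply g z = k"
        using g(2) by (simp add: blinfun.diff_right blinfun.scaleR_right)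
      then show "z \<in> (\<lambda>z. z - blinfun_apply g z *\<^sub>R w) -` span S" using k by simp
    next
      fix z assume "z \<in> (\<lambda>z. z - blinfun_apply g z *\<^sub>R w) -` span S"
      then show "z \<in> span (insert w S)" using span_breakdown_eq by blast
    qed
    show ?thesis
      unfolding eq by (rule closed_vimage[OF insert.IH]) (intro continuous_intros)
  qed
qed

definition biorthogonal :: "'a set \<Rightarrow> ('a \<Rightarrow> ('a::real_normed_vector \<Rightarrow>\<^sub>L real)) \<Rightarrow> bool" where
  "biorthogonal A c \<longleftrightarrow> (\<forall>a\<in>A. \<forall>a'\<in>A. blinfun_apply (c a) a' = (if a' = a then 1 else 0))"

lemma biorthogonal_exists:
  fixes A :: "'a::real_normed_vector set"
  assumes "finite A" "independent A"
  obtains c where "biorthogonal A c"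
proof -
  have ex: "\<exists>g::'a \<Rightarrow>\<^sub>L real.
      (\<forall>v\<in>span (A - {a}). blinfun_apply g v = 0) \<and> blinfun_apply g a = 1" if "a \<in> A" for a
  proof -
    from that have "a \<notin> span (A - {a})"
      using assms(2) unfolding dependent_def by blast
    moreover have "closed (span (A - {a}))"
      using assms(1) by (simp add: closed_span_finite)
    ultimately obtain g :: "'a \<Rightarrow>\<^sub>L real"
      where "\<And>v. v \<in> span (A - {a}) \<Longrightarrow> blinfun_apply g v = 0" "blinfun_apply g a = 1"
      using functional_separating_closed_subspace[OF subspace_span] by blast
    then show ?thesis by blast
  qed
  define c where "c a = (SOME g::'a \<Rightarrow>\<^sub>L real.
      (\<forall>v\<in>span (A - {a}). blinfun_apply g v = 0) \<and> blinfun_apply g a = 1)" for a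
  have c: "(\<forall>v\<in>span (A - {a}). blinfun_apply (c a) v = 0) \<and> blinfun_apply (c a) a = 1"
    if "a \<in> A" for a
    unfolding c_def using someI_ex[OF ex[OF that]] .
  have "blinfun_apply (c a) a' = (if a' = a then 1 else 0)" if "a \<in> A" "a' \<in> A" for a a'
  proof (cases "a' = a")
    case False
    then have "a' \<in> span (A - {a})"
      using that by (intro span_base) simp
    then show ?thesis using c[OF that(1)] False by simp
  qed (use c that in simp)
  then have "biorthogonal A c"
    unfolding biorthogonal_def by blast
  then show thesis by (rule that)
qed

lemma biorthogonal_expansion:
  assumes "finite A" "biorthogonal A c" "y \<in> span A"
  shows "y = (\<Sum>v\<in>A. blinfun_apply (c v) y *\<^sub>R v)"
proof -
  obtain u where u: "y = (\<Sum>v\<in>A. u v *\<^sub>R v)"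
    using assms(3) span_finite[OF assms(1)] by blast
  have "blinfun_apply (c w) y = u w" if "w \<in> A" for w
  proof -
    have "blinfun_apply (c w) y = (\<Sum>v\<in>A. u v * blinfun_apply (c w) v)"
      unfolding u by (simp add: blinfun.sum_right blinfun.scaleR_right)
    also have "\<dots> = (\<Sum>v\<in>A. if v = w then u v else 0)"
      using assms(2) that unfolding biorthogonal_def by (intro sum.cong) auto
    also have "\<dots> = u w" using assms(1) that by simp
    finally show ?thesis .
  qed
  then show ?thesis unfolding u by (intro sum.cong) auto
qed

section \<open>The weak topology of a reflexive space\<close>

text \<open>The weak topology is the one induced by evals from the pointwise topology on
  functions on the dual: a subset C of the unit ball is weakly closed iff evals ` C is
  closed there.\<close>

definition evals :: "'a::real_normed_vector \<Rightarrow> ('a \<Rightarrow>\<^sub>L real) \<Rightarrow> real" where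
  "evals x = (\<lambda>g. blinfun_apply g x)"

abbreviation pointwise_topology :: "(('a::real_normed_vector \<Rightarrow>\<^sub>L real) \<Rightarrow> real) topology" where
  "pointwise_topology \<equiv> product_topology (\<lambda>_. euclideanreal) UNIV"

lemma inj_evals: "inj evals"
proof (rule injI)
  fix x y :: 'a assume "evals x = evals y"
  then show "x = y"
    using functionals_separate_points[of x y] unfolding evals_def by metis
qed

lemma evals_Inter:
  assumes "\<C> \<noteq> {}"
  shows "evals ` \<Inter>\<C> = \<Inter>((`) evals ` \<C>)"
proof -
  obtain C0 where "C0 \<in> \<C>" using assms by blast
  from image_INT[OF inj_evals _ this, of id] show ?thesis by simp
qed

lemma continuous_map_pointwise_apply [continuous_intros]:
  "continuous_map pointwise_topology euclideanreal (\<lambda>\<phi>. \<phi> g)"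
  using continuous_map_product_projection[of g UNIV "\<lambda>_. euclideanreal"] by simp

lemma continuous_map_scaleR_const [continuous_intros]:
  fixes v :: "'b::real_normed_vector"
  shows "continuous_map X euclideanreal f \<Longrightarrow> continuous_map X euclidean (\<lambda>x. f x *\<^sub>R v)"
  by (simp add: continuous_map_atin tendsto_scaleR)

lemma closedin_pointwise_linear:
  "closedin pointwise_topology
     {\<phi> :: ('a::real_normed_vector \<Rightarrow>\<^sub>L real) \<Rightarrow> real. \<forall>g h c. \<phi> (c *\<^sub>R g + h) = c * \<phi> g + \<phi> h}"
proof -
  have "{\<phi> :: ('a \<Rightarrow>\<^sub>L real) \<Rightarrow> real. \<forall>g h c. \<phi> (c *\<^sub>R g + h) = c * \<phi> g + \<phi> h}
      = (\<Inter>(g, h, c) \<in> UNIV. {\<phi> \<in> topspace pointwise_topology.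
           \<phi> (c *\<^sub>R g + h) - c * \<phi> g - \<phi> h \<in> {0}})"
    by (auto simp: algebra_simps)
  also have "closedin pointwise_topology \<dots>"
  proof (intro closedin_Inter ballI)
    fix S :: "(('a \<Rightarrow>\<^sub>L real) \<Rightarrow> real) set"
    assume "S \<in> (\<lambda>(g, h, c). {\<phi> \<in> topspace pointwise_topology.
      \<phi> (c *\<^sub>R g + h) - c * \<phi> g - \<phi> h \<in> {0::real}}) ` UNIV"
    then obtain g h :: "'a \<Rightarrow>\<^sub>L real" and c :: real where S: "S = {\<phi> \<in> topspace pointwise_topology.
      \<phi> (c *\<^sub>R g + h) - c * \<phi> g - \<phi> h \<in> {0}}" by auto
    have "continuous_map pointwise_topology euclideanreal (\<lambda>\<phi>. \<phi> (c *\<^sub>R g + h) - c * \<phi> g - \<phi> h)"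
      by (intro continuous_intros)
    then show "closedin pointwise_topology S"
      unfolding S by (rule closedin_continuous_map_preimage) simp
  qed simp
  finally show ?thesis .
qed

text \<open>Reflexivity is used exactly here: a functional on the dual that is linear and
  bounded by the norm is evaluation at a point of the unit ball.\<close>

lemma evals_cball_eq:
  assumes "reflexive_space TYPE('a::real_normed_vector)"
  shows "evals ` cball (0::'a) 1 = PiE UNIV (\<lambda>g. cball 0 (norm g)) \<inter>
    {\<phi>. \<forall>g h c. \<phi> (c *\<^sub>R g + h) = c * \<phi> g + \<phi> h}"
proof (intro set_eqI iffI)
  fix \<phi> assume "\<phi> \<in> evals ` cball (0::'a) 1"
  then obtain x :: 'a where x: "norm x \<le> 1" "\<phi> = evals x" by auto
  have "\<bar>blinfun_apply g x\<bar> \<le> norm g" for g :: "'a \<Rightarrow>\<^sub>L real"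
    using norm_blinfun[of g x] mult_left_le[OF x(1), of "norm g"] by simp
  then show "\<phi> \<in> PiE UNIV (\<lambda>g. cball 0 (norm g)) \<inter>
      {\<phi>. \<forall>g h c. \<phi> (c *\<^sub>R g + h) = c * \<phi> g + \<phi> h}"
    unfolding x(2) evals_def by (simp add: PiE_iff blinfun.add_left blinfun.scaleR_left)
next
  fix \<phi> :: "('a \<Rightarrow>\<^sub>L real) \<Rightarrow> real"
  assume "\<phi> \<in> PiE UNIV (\<lambda>g. cball 0 (norm g)) \<inter>
      {\<phi>. \<forall>g h c. \<phi> (c *\<^sub>R g + h) = c * \<phi> g + \<phi> h}"
  then have bound: "\<And>g. \<bar>\<phi> g\<bar> \<le> norm g"
    and lin: "\<And>g h c. \<phi> (c *\<^sub>R g + h) = c * \<phi> g + \<phi> h"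
    by (auto simp: PiE_iff)
  have "\<phi> 0 = 0" using lin[of 1 0 0] by simp
  then have "bounded_linear \<phi>"
  proof (intro bounded_linear_intro[where K=1])
    show "\<phi> (g + h) = \<phi> g + \<phi> h" for g h using lin[of 1 g h] by simp
    show "\<phi> (c *\<^sub>R g) = c *\<^sub>R \<phi> g" for c g using lin[of c g 0] \<open>\<phi> 0 = 0\<close> by simp
    show "norm (\<phi> g) \<le> norm g * 1" for g using bound[of g] by simp
  qed
  moreover obtain x :: 'a where "\<forall>f. blinfun_apply (Blinfun \<phi>) f = blinfun_apply f x"
    using assms unfolding reflexive_space_def by blast
  ultimately have "\<phi> = evals x"
    unfolding evals_def by (auto simp: bounded_linear_Blinfun_apply)
  moreover obtain g :: "'a \<Rightarrow>\<^sub>L real" where "norm g \<le> 1" "blinfun_apply g x = norm x"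
    using exists_norming_functional by blast
  ultimately have "norm x \<le> 1"
    using bound[of g] unfolding evals_def by auto
  with \<open>\<phi> = evals x\<close> show "\<phi> \<in> evals ` cball 0 1" by auto
qed

lemma compactin_evals_cball:
  assumes "reflexive_space TYPE('a::real_normed_vector)"
  shows "compactin pointwise_topology (evals ` cball (0::'a) 1)"
proof -
  let ?P = "PiE UNIV (\<lambda>g::'a \<Rightarrow>\<^sub>L real. cball 0 (norm g))"
  have P: "compactin pointwise_topology ?P"
    by (simp add: compactin_PiE)
  then have "closedin pointwise_topology ?P"
    by (rule compactin_imp_closedin[rotated]) (simp add: Hausdorff_space_product_topology)
  then have "closedin pointwise_topology
      (?P \<inter> {\<phi>. \<forall>g h c. \<phi> (c *\<^sub>R g + h) = c * \<phi> g + \<phi> h})"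
    by (rule closedin_Int[OF _ closedin_pointwise_linear])
  then show ?thesis
    unfolding evals_cball_eq[OF assms] by (rule closed_compactin[OF P, rotated]) auto
qed

definition weakly_closed_in_ball :: "'a::real_normed_vector set \<Rightarrow> bool" where
  "weakly_closed_in_ball C \<longleftrightarrow> C \<subseteq> cball 0 1 \<and> closedin pointwise_topology (evals ` C)"

lemma weakly_closed_in_ball_cball:
  assumes "reflexive_space TYPE('a::real_normed_vector)"
  shows "weakly_closed_in_ball (cball (0::'a) 1)"
  unfolding weakly_closed_in_ball_def
  using compactin_imp_closedin[OF _ compactin_evals_cball[OF assms]]
  by (simp add: Hausdorff_space_product_topology)

lemma weakly_closed_in_ball_compactin:
  assumes "reflexive_space TYPE('a::real_normed_vector)" "weakly_closed_in_ball (C::'a set)"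
  shows "compactin pointwise_topology (evals ` C)"
  using assms(2) unfolding weakly_closed_in_ball_def
  by (intro closed_compactin[OF compactin_evals_cball[OF assms(1)]]) auto

lemma weakly_closed_in_ball_Int:
  "weakly_closed_in_ball C \<Longrightarrow> weakly_closed_in_ball D \<Longrightarrow> weakly_closed_in_ball (C \<inter> D)"
  unfolding weakly_closed_in_ball_def
  using image_Int[OF inj_evals] by (auto intro: closedin_Int)

lemma weakly_closed_in_ball_Inter:
  assumes "\<C> \<noteq> {}" "\<And>C. C \<in> \<C> \<Longrightarrow> weakly_closed_in_ball C"
  shows "weakly_closed_in_ball (\<Inter>\<C>)"
proof -
  have "evals ` (\<Inter>\<C>) = (\<Inter>C\<in>\<C>. evals ` C)"
    using evals_Inter[OF assms(1)] .
  moreover have "\<Inter>\<C> \<subseteq> cball 0 1"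
    using assms unfolding weakly_closed_in_ball_def by blast
  ultimately show ?thesis
    using assms unfolding weakly_closed_in_ball_def by (auto intro!: closedin_Inter)
qed

lemma weakly_closed_in_ball_preimage:
  assumes "reflexive_space TYPE('a::real_normed_vector)"
    and "continuous_map pointwise_topology euclideanreal F" "closed S"
  shows "weakly_closed_in_ball {x \<in> cball (0::'a) 1. F (evals x) \<in> S}"
proof -
  have "closedin pointwise_topology {\<phi> \<in> topspace pointwise_topology. F \<phi> \<in> S}"
    using closedin_continuous_map_preimage[OF assms(2)] assms(3) closed_closedin by blast
  then have "closedin pointwise_topology (evals ` cball (0::'a) 1 \<inter> {\<phi>. F \<phi> \<in> S})"
    using weakly_closed_in_ball_cball[OF assms(1)] unfolding weakly_closed_in_ball_def
    by (auto intro: closedin_Int)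
  moreover have "evals ` {x \<in> cball (0::'a) 1. F (evals x) \<in> S} = evals ` cball 0 1 \<inter> {\<phi>. F \<phi> \<in> S}"
    by blast
  ultimately show ?thesis
    unfolding weakly_closed_in_ball_def by auto
qed

lemma weakly_closed_in_ball_level:
  fixes h :: "'a::real_normed_vector \<Rightarrow>\<^sub>L real"
  assumes "reflexive_space TYPE('a)" "weakly_closed_in_ball M"
  shows "weakly_closed_in_ball {y \<in> M. blinfun_apply h y = c}"
proof -
  have "weakly_closed_in_ball (M \<inter> {x \<in> cball (0::'a) 1. (\<lambda>\<phi>. \<phi> h) (evals x) \<in> {c}})"
    by (intro weakly_closed_in_ball_Int assms weakly_closed_in_ball_preimage
        continuous_map_pointwise_apply closed_singleton)
  moreover have "M \<inter> {x \<in> cball (0::'a) 1. (\<lambda>\<phi>. \<phi> h) (evals x) \<in> {c}} = {y \<in> M. blinfun_apply h y = c}"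
    using assms(2) unfolding weakly_closed_in_ball_def evals_def by auto
  ultimately show ?thesis by simp
qed

lemma weakly_closed_in_ball_Inter_nonempty:
  assumes "reflexive_space TYPE('a::real_normed_vector)"
    and "\<C> \<noteq> {}" and closed: "\<And>C. C \<in> \<C> \<Longrightarrow> weakly_closed_in_ball (C::'a set)"
    and fip: "\<And>\<F>. finite \<F> \<Longrightarrow> \<F> \<subseteq> \<C> \<Longrightarrow> \<F> \<noteq> {} \<Longrightarrow> \<Inter>\<F> \<noteq> {}"
  shows "\<Inter>\<C> \<noteq> {}"
proof -
  obtain C0 where "C0 \<in> \<C>" using assms(2) by blast
  let ?K = "evals ` C0" and ?U = "(\<lambda>C. evals ` C) ` \<C>"
  have "?K \<inter> \<Inter>\<F> \<noteq> {}" if \<F>: "finite \<F>" "\<F> \<subseteq> ?U" for \<F>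
  proof -
    obtain \<F>' where \<F>': "\<F>' \<subseteq> \<C>" "finite \<F>'" "\<F> = (\<lambda>C. evals ` C) ` \<F>'"
      using finite_subset_image[OF \<F>] by blast
    then have "\<Inter>(insert C0 \<F>') \<noteq> {}"
      using fip[of "insert C0 \<F>'"] \<open>C0 \<in> \<C>\<close> by blast
    then show ?thesis
      unfolding \<F>'(3) by blast
  qed
  moreover have "\<forall>U\<in>?U. closedin pointwise_topology U"
    using closed unfolding weakly_closed_in_ball_def by blast
  moreover have "compactin pointwise_topology ?K"
    using weakly_closed_in_ball_compactin[OF assms(1) closed[OF \<open>C0 \<in> \<C>\<close>]] .
  then have "(\<forall>U\<in>?U. closedin pointwise_topology U) \<and>
      (\<forall>\<F>. finite \<F> \<and> \<F> \<subseteq> ?U \<longrightarrow> ?K \<inter> \<Inter>\<F> \<noteq> {}) \<longrightarrow> ?K \<inter> \<Inter>?U \<noteq> {}"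
    unfolding compactin_fip by blast
  ultimately have "?K \<inter> \<Inter>?U \<noteq> {}"
    by blast
  then show ?thesis
    using evals_Inter[OF assms(2)] by auto
qed

lemma weakly_closed_in_ball_chain_Inter_nonempty:
  fixes Ch :: "'a::real_normed_vector set set"
  assumes refl: "reflexive_space TYPE('a)" and "Ch \<noteq> {}"
    and "\<And>G. G \<in> Ch \<Longrightarrow> weakly_closed_in_ball G" and "\<And>G. G \<in> Ch \<Longrightarrow> G \<noteq> {}"
    and cmp: "\<And>G H. G \<in> Ch \<Longrightarrow> H \<in> Ch \<Longrightarrow> G \<subseteq> H \<or> H \<subseteq> G"
  shows "\<Inter>Ch \<noteq> {}"
proof (rule weakly_closed_in_ball_Inter_nonempty[OF refl assms(2,3)])
  fix \<F> assume "finite \<F>" "\<F> \<subseteq> Ch" "\<F> \<noteq> {}"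
  then have "\<Inter>\<F> \<in> \<F>"
    using cmp by (intro Inter_in_chain[of _ UNIV]) (auto simp: subset_chain_def)
  then show "\<Inter>\<F> \<noteq> {}"
    using \<open>\<F> \<subseteq> Ch\<close> assms(4) by blast
qed

lemma weakly_closed_in_ball_attains_max:
  fixes h :: "'a::real_normed_vector \<Rightarrow>\<^sub>L real"
  assumes "reflexive_space TYPE('a)" "weakly_closed_in_ball C" "C \<noteq> {}"
  obtains x where "x \<in> C" "\<And>y. y \<in> C \<Longrightarrow> blinfun_apply h y \<le> blinfun_apply h x"
proof -
  have "compactin euclideanreal ((\<lambda>\<phi>. \<phi> h) ` evals ` C)"
    by (rule image_compactin[OF weakly_closed_in_ball_compactin[OF assms(1,2)]])
      (rule continuous_map_pointwise_apply)
  then have "compact ((\<lambda>\<phi>. \<phi> h) ` evals ` C)" by simp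
  from compact_attains_sup[OF this] obtain s where
    s: "s \<in> (\<lambda>\<phi>. \<phi> h) ` evals ` C" "\<forall>t \<in> (\<lambda>\<phi>. \<phi> h) ` evals ` C. t \<le> s"
    using assms(3) by blast
  then obtain x where "x \<in> C" "s = blinfun_apply h x" unfolding evals_def by auto
  with s show thesis using that unfolding evals_def by auto
qed

section \<open>Faces and extreme points of the unit ball\<close>

lemma linear_blinfun_apply: "linear (blinfun_apply f)"
  by (rule bounded_linear.linear[OF blinfun.bounded_linear_right])

lemma face_of_linear_argmax:
  fixes h :: "'a::real_vector \<Rightarrow> real"
  assumes "linear h" "convex S" "x0 \<in> S" and le: "\<And>y. y \<in> S \<Longrightarrow> h y \<le> h x0"
  shows "{y \<in> S. h y = h x0} face_of S"
  unfolding face_of_def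
proof (intro conjI)
  have "{y \<in> S. h y = h x0} = S \<inter> h -` {h x0}" by blast
  then show "convex {y \<in> S. h y = h x0}"
    using convex_Int[OF assms(2) convex_linear_vimage[OF assms(1) convex_singleton]] by simp
  show "\<forall>a\<in>S. \<forall>b\<in>S. \<forall>x\<in>{y \<in> S. h y = h x0}. x \<in> open_segment a b \<longrightarrow>
      a \<in> {y \<in> S. h y = h x0} \<and> b \<in> {y \<in> S. h y = h x0}"
  proof (intro ballI impI)
    fix a b x assume ab: "a \<in> S" "b \<in> S" and x: "x \<in> {y \<in> S. h y = h x0}"
      and "x \<in> open_segment a b"
    then obtain u where u: "0 < u" "u < 1" "x = (1 - u) *\<^sub>R a + u *\<^sub>R b"
      by (auto simp: in_segment)
    have "h x = (1 - u) * h a + u * h b"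
      unfolding u(3) using assms(1) by (simp add: linear_add linear_scale)
    then have "(1 - u) * (h x0 - h a) + u * (h x0 - h b) = 0"
      using x by (simp add: algebra_simps)
    moreover have "(1 - u) * (h x0 - h a) \<ge> 0" "u * (h x0 - h b) \<ge> 0"
      using u le ab by simp_all
    ultimately have "(1 - u) * (h x0 - h a) = 0" "u * (h x0 - h b) = 0"
      by linarith+
    then show "a \<in> {y \<in> S. h y = h x0} \<and> b \<in> {y \<in> S. h y = h x0}"
      using u ab by simp
  qed
qed blast

lemma exists_minimal_weakly_closed_face:
  fixes F :: "'a::real_normed_vector set"
  assumes refl: "reflexive_space TYPE('a)"
    and F: "F face_of cball 0 1" "F \<noteq> {}" "weakly_closed_in_ball F"
  obtains M where "M face_of F" "M \<noteq> {}" "weakly_closed_in_ball M"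
    "\<And>G. G face_of M \<Longrightarrow> G \<noteq> {} \<Longrightarrow> weakly_closed_in_ball G \<Longrightarrow> G = M"
proof -
  define A where "A = {G. G face_of F \<and> G \<noteq> {} \<and> weakly_closed_in_ball G}"
  have "\<exists>M\<in>A. \<forall>G\<in>A. G \<subseteq> M \<longrightarrow> G = M"
  proof (rule predicate_Zorn)
    show "partial_order_on A (relation_of (\<lambda>X Y. Y \<subseteq> X) A)"
      by (rule partial_order_on_relation_ofI) auto
  next
    fix Ch assume "Ch \<in> Chains (relation_of (\<lambda>X Y. Y \<subseteq> X) A)"
    then have sub: "Ch \<subseteq> A" and cmp: "\<And>X Y. X \<in> Ch \<Longrightarrow> Y \<in> Ch \<Longrightarrow> X \<subseteq> Y \<or> Y \<subseteq> X"
      unfolding Chains_def relation_of_def by auto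
    show "\<exists>U\<in>A. \<forall>X\<in>Ch. U \<subseteq> X"
    proof (cases "Ch = {}")
      case True
      then show ?thesis
        using F face_of_refl[OF face_of_imp_convex[OF F(1)]] unfolding A_def by blast
    next
      case False
      have "\<Inter>Ch face_of F"
        using False sub unfolding A_def by (intro face_of_Inter) auto
      moreover have "weakly_closed_in_ball (\<Inter>Ch)"
        using False sub unfolding A_def by (intro weakly_closed_in_ball_Inter) auto
      moreover have "\<Inter>Ch \<noteq> {}"
        using sub cmp unfolding A_def
        by (intro weakly_closed_in_ball_chain_Inter_nonempty[OF refl False]) auto
      ultimately show ?thesis
        unfolding A_def by blast
    qed
  qed
  then obtain M where "M \<in> A" and min: "\<And>G. G \<in> A \<Longrightarrow> G \<subseteq> M \<Longrightarrow> G = M"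
    by blast
  show thesis
  proof (rule that)
    show "M face_of F" "M \<noteq> {}" "weakly_closed_in_ball M"
      using \<open>M \<in> A\<close> unfolding A_def by auto
    show "G = M" if "G face_of M" "G \<noteq> {}" "weakly_closed_in_ball G" for G
      using min[of G] that face_of_trans[OF that(1) \<open>M face_of F\<close>] face_of_imp_subset[OF that(1)]
      unfolding A_def by blast
  qed
qed

lemma minimal_weakly_closed_face_singleton:
  fixes M :: "'a::real_normed_vector set"
  assumes refl: "reflexive_space TYPE('a)"
    and M: "convex M" "M \<noteq> {}" "weakly_closed_in_ball M"
    and min: "\<And>G. G face_of M \<Longrightarrow> G \<noteq> {} \<Longrightarrow> weakly_closed_in_ball G \<Longrightarrow> G = M"
  obtains e where "M = {e}"
proof -
  have const: "blinfun_apply h a = blinfun_apply h b" if "a \<in> M" "b \<in> M" for a b and h :: "'a \<Rightarrow>\<^sub>L real"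
  proof -
    obtain x0 where x0: "x0 \<in> M" "\<And>y. y \<in> M \<Longrightarrow> blinfun_apply h y \<le> blinfun_apply h x0"
      using weakly_closed_in_ball_attains_max[OF refl M(3,2)] by blast
    have "{y \<in> M. blinfun_apply h y = blinfun_apply h x0} face_of M"
      by (rule face_of_linear_argmax[OF linear_blinfun_apply M(1) x0])
    moreover have "weakly_closed_in_ball {y \<in> M. blinfun_apply h y = blinfun_apply h x0}"
      by (rule weakly_closed_in_ball_level[OF refl M(3)])
    ultimately have eq: "{y \<in> M. blinfun_apply h y = blinfun_apply h x0} = M"
      using min x0(1) by blast
    have "a \<in> {y \<in> M. blinfun_apply h y = blinfun_apply h x0}"
      "b \<in> {y \<in> M. blinfun_apply h y = blinfun_apply h x0}"
      unfolding eq using that .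
    then show ?thesis by simp
  qed
  obtain e where "e \<in> M" using M(2) by blast
  have "M = {e}"
  proof (intro set_eqI iffI)
    fix b assume "b \<in> M"
    show "b \<in> {e}"
    proof (rule ccontr)
      assume "b \<notin> {e}"
      then obtain h :: "'a \<Rightarrow>\<^sub>L real" where "blinfun_apply h e \<noteq> blinfun_apply h b"
        using functionals_separate_points[of e b] by auto
      with const[OF \<open>e \<in> M\<close> \<open>b \<in> M\<close>] show False by blast
    qed
  qed (use \<open>e \<in> M\<close> in simp)
  then show thesis by (rule that)
qed

text \<open>Krein--Milman for weakly closed faces: a minimal one is a single point, since every
  functional is constant on it.\<close>

lemma weakly_closed_face_extreme_point:
  fixes F :: "'a::real_normed_vector set"
  assumes refl: "reflexive_space TYPE('a)"
    and F: "F face_of cball 0 1" "F \<noteq> {}" "weakly_closed_in_ball F"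
  obtains e where "e \<in> F" "e extreme_point_of cball 0 1"
proof -
  obtain M where M: "M face_of F" "M \<noteq> {}" "weakly_closed_in_ball M"
    and min: "\<And>G. G face_of M \<Longrightarrow> G \<noteq> {} \<Longrightarrow> weakly_closed_in_ball G \<Longrightarrow> G = M"
    using exists_minimal_weakly_closed_face[OF refl F] by blast
  obtain e where "M = {e}"
    using minimal_weakly_closed_face_singleton[OF refl face_of_imp_convex[OF M(1)] M(2,3) min] by blast
  then have "e \<in> F" "{e} face_of cball 0 1"
    using M(1) face_of_imp_subset face_of_trans[OF _ F(1)] by blast+
  then show thesis
    using that face_of_singleton by blast
qed

section \<open>Norm-attaining points and supporting functionals\<close>

lemma exists_unit_ball_norm_apply_gt:
  fixes S :: "'a::real_normed_vector \<Rightarrow>\<^sub>L 'b::real_normed_vector"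
  assumes "c < norm S"
  shows "\<exists>x. norm x \<le> 1 \<and> c < norm (blinfun_apply S x)"
proof (rule ccontr)
  assume "\<not> ?thesis"
  then have le: "norm (blinfun_apply S x) \<le> c" if "norm x \<le> 1" for x
    using that by (auto simp: not_less)
  then have "0 \<le> c"
    using le[of 0] by simp
  have "norm S \<le> c"
  proof (rule norm_blinfun_bound[OF \<open>0 \<le> c\<close>])
    fix x
    show "norm (blinfun_apply S x) \<le> c * norm x"
    proof (cases "x = 0")
      case False
      have "norm (blinfun_apply S ((1 / norm x) *\<^sub>R x)) \<le> c"
        using le False by simp
      then show ?thesis
        using False by (simp add: blinfun.scaleR_right field_simps)
    qed simp
  qed
  with assms show False by simp
qed

definition rank_one :: "('a::real_normed_vector \<Rightarrow>\<^sub>L real) \<Rightarrow> 'b::real_normed_vector \<Rightarrow> 'a \<Rightarrow>\<^sub>L 'b" where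
  "rank_one g y = Blinfun (\<lambda>x. blinfun_apply g x *\<^sub>R y)"

lemma rank_one_apply [simp]: "blinfun_apply (rank_one g y) x = blinfun_apply g x *\<^sub>R y"
proof -
  have "bounded_linear (\<lambda>x. blinfun_apply g x *\<^sub>R y)"
    using bounded_linear_compose[OF bounded_linear_scaleR_left blinfun.bounded_linear_right] .
  then show ?thesis unfolding rank_one_def by (simp add: bounded_linear_Blinfun_apply)
qed

lemma rank_one_uminus_right: "rank_one g (- y) = - rank_one g y"
  by (rule blinfun_eqI) (simp add: uminus_blinfun.rep_eq)

definition eval_functional ::
  "'a::real_normed_vector \<Rightarrow> ('b::real_normed_vector \<Rightarrow>\<^sub>L real) \<Rightarrow> ('a \<Rightarrow>\<^sub>L 'b) \<Rightarrow>\<^sub>L real" where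
  "eval_functional u \<phi> = Blinfun (\<lambda>S. blinfun_apply \<phi> (blinfun_apply S u))"

lemma eval_functional_apply [simp]:
  "blinfun_apply (eval_functional u \<phi>) S = blinfun_apply \<phi> (blinfun_apply S u)"
proof -
  have "bounded_linear (\<lambda>S. blinfun_apply \<phi> (blinfun_apply S u))"
    using bounded_linear_compose[OF blinfun.bounded_linear_right blinfun.bounded_linear_left] .
  then show ?thesis unfolding eval_functional_def by (simp add: bounded_linear_Blinfun_apply)
qed

lemma norm_eval_functional_le: "norm (eval_functional u \<phi>) \<le> norm \<phi> * norm u"
proof (rule norm_blinfun_bound)
  fix S :: "'a \<Rightarrow>\<^sub>L 'b"
  have "norm (blinfun_apply \<phi> (blinfun_apply S u)) \<le> norm \<phi> * norm (blinfun_apply S u)"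
    by (rule norm_blinfun)
  also have "\<dots> \<le> norm \<phi> * (norm S * norm u)"
    by (intro mult_left_mono norm_blinfun) simp
  finally show "norm (blinfun_apply (eval_functional u \<phi>) S) \<le> norm \<phi> * norm u * norm S"
    by (simp add: ac_simps)
qed simp

lemma linear_eval_functional: "linear (eval_functional u)"
proof
  show "eval_functional u (\<phi> + \<psi>) = eval_functional u \<phi> + eval_functional u \<psi>" for \<phi> \<psi>
    by (rule blinfun_eqI) (simp add: blinfun.add_left)
  show "eval_functional u (c *\<^sub>R \<phi>) = c *\<^sub>R eval_functional u \<phi>" for c \<phi>
    by (rule blinfun_eqI) (simp add: blinfun.scaleR_left)
qed

lemma norm_attaining_face:
  fixes T :: "'a::real_normed_vector \<Rightarrow>\<^sub>L 'b::real_normed_vector"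
  assumes refl: "reflexive_space TYPE('a)" and "norm T = 1" and x0: "x0 \<in> norm_attaining_set T"
  obtains F where "F face_of cball 0 1" "weakly_closed_in_ball F" "x0 \<in> F"
    "F \<subseteq> norm_attaining_set T"
proof -
  have x0n: "norm x0 = 1" "norm (blinfun_apply T x0) = 1"
    using x0 assms(2) unfolding norm_attaining_set_def by auto
  obtain \<psi> :: "'b \<Rightarrow>\<^sub>L real"
    where \<psi>: "norm \<psi> \<le> 1" "blinfun_apply \<psi> (blinfun_apply T x0) = norm (blinfun_apply T x0)"
    using exists_norming_functional by blast
  define h where "h = \<psi> o\<^sub>L T"
  have hT: "blinfun_apply h y \<le> norm (blinfun_apply T y)" for y
  proof -
    have "blinfun_apply h y \<le> norm (blinfun_apply \<psi> (blinfun_apply T y))"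
      unfolding h_def by simp
    also have "\<dots> \<le> norm \<psi> * norm (blinfun_apply T y)"
      by (rule norm_blinfun)
    also have "\<dots> \<le> norm (blinfun_apply T y)"
      using \<psi>(1) by (simp add: mult_left_le_one_le)
    finally show ?thesis .
  qed
  have Ty: "norm (blinfun_apply T y) \<le> norm y" for y
    using norm_blinfun[of T y] assms(2) by simp
  have "blinfun_apply h x0 = 1"
    using \<psi>(2) x0n(2) unfolding h_def by simp
  define F where "F = {y \<in> cball 0 1. blinfun_apply h y = blinfun_apply h x0}"
  show thesis
  proof (rule that)
    show "F face_of cball 0 1"
      unfolding F_def
    proof (rule face_of_linear_argmax[OF linear_blinfun_apply
          convex_cball])
      show "x0 \<in> cball 0 1" using x0n by simp
      show "blinfun_apply h y \<le> blinfun_apply h x0" if "y \<in> cball 0 1" for y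
        using hT[of y] Ty[of y] that \<open>blinfun_apply h x0 = 1\<close> by simp
    qed
    show "weakly_closed_in_ball F"
      unfolding F_def by (rule weakly_closed_in_ball_level[OF refl weakly_closed_in_ball_cball[OF refl]])
    show "x0 \<in> F"
      using x0n unfolding F_def by simp
    show "F \<subseteq> norm_attaining_set T"
    proof
      fix y assume "y \<in> F"
      then have "norm y \<le> 1" "1 \<le> norm (blinfun_apply T y)"
        using hT[of y] \<open>blinfun_apply h x0 = 1\<close> unfolding F_def by auto
      then show "y \<in> norm_attaining_set T"
        using Ty[of y] assms(2) unfolding norm_attaining_set_def by simp
    qed
  qed
qed

lemma norm_attaining_set_subset_span:
  fixes T :: "'a::real_normed_vector \<Rightarrow>\<^sub>L 'b::real_normed_vector"
  assumes refl: "reflexive_space TYPE('a)" and "norm T = 1" and "finite X"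
    and ext: "norm_attaining_set T \<inter> {e. e extreme_point_of cball 0 1} \<subseteq> span X"
  shows "norm_attaining_set T \<subseteq> span X"
proof
  fix x0 assume x0: "x0 \<in> norm_attaining_set T"
  show "x0 \<in> span X"
  proof (rule ccontr)
    assume "x0 \<notin> span X"
    then obtain g :: "'a \<Rightarrow>\<^sub>L real"
      where g: "\<And>v. v \<in> span X \<Longrightarrow> blinfun_apply g v = 0" "blinfun_apply g x0 = 1"
      using functional_separating_closed_subspace[OF subspace_span closed_span_finite[OF \<open>finite X\<close>]]
      by blast
    obtain F where F: "F face_of cball 0 1" "weakly_closed_in_ball F" "x0 \<in> F"
      "F \<subseteq> norm_attaining_set T"
      using norm_attaining_face[OF refl assms(2) x0] by blast
    have "F \<noteq> {}" using F(3) by blast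
    then obtain x1 where x1: "x1 \<in> F" "\<And>y. y \<in> F \<Longrightarrow> blinfun_apply g y \<le> blinfun_apply g x1"
      using weakly_closed_in_ball_attains_max[OF refl F(2)] by blast
    define F' where "F' = {y \<in> F. blinfun_apply g y = blinfun_apply g x1}"
    have "F' face_of F"
      unfolding F'_def by (rule face_of_linear_argmax[OF
          linear_blinfun_apply face_of_imp_convex[OF F(1)] x1])
    then have "F' face_of cball 0 1"
      using F(1) by (rule face_of_trans)
    moreover have "weakly_closed_in_ball F'"
      unfolding F'_def by (rule weakly_closed_in_ball_level[OF refl F(2)])
    moreover have "F' \<noteq> {}"
      using x1(1) unfolding F'_def by blast
    ultimately obtain e where e: "e \<in> F'" "e extreme_point_of cball 0 1"
      using weakly_closed_face_extreme_point[OF refl] by blast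
    then have "e \<in> span X"
      using ext F(4) unfolding F'_def by blast
    then have "blinfun_apply g x1 = 0"
      using g(1) e(1) unfolding F'_def by simp
    moreover have "blinfun_apply g x0 \<le> blinfun_apply g x1"
      using x1(2) F(3) by blast
    ultimately show False
      using g(2) by simp
  qed
qed

lemma finite_dim_biorthogonal_basis:
  assumes "\<exists>B::'b set. finite B \<and> span B = UNIV"
  obtains E :: "'b::real_normed_vector set" and c
  where "finite E" "span E = UNIV" "card E = dim (UNIV :: 'b set)" "biorthogonal E c"
proof -
  obtain B0 :: "'b set" where B0: "finite B0" "span B0 = UNIV"
    using assms by blast
  obtain E :: "'b set" where E: "independent E" "UNIV \<subseteq> span E" "card E = dim (UNIV :: 'b set)"
    by (rule basis_exists)
  have "finite E"
    using independent_span_bound[OF B0(1) E(1)] B0(2) by blast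
  moreover obtain c where "biorthogonal E c"
    using biorthogonal_exists[OF \<open>finite E\<close> E(1)] by blast
  moreover have "span E = UNIV"
    using E(2) by blast
  ultimately show thesis
    using that E(3) by blast
qed

text \<open>On a finite-dimensional codomain the norm of T x is a continuous function of the
  finitely many coordinates c v (T x), so it depends weakly continuously on x.\<close>

lemma weakly_continuous_norm_apply:
  fixes T :: "'a::real_normed_vector \<Rightarrow>\<^sub>L 'b::real_normed_vector"
  assumes "\<exists>B::'b set. finite B \<and> span B = UNIV"
  obtains N where "continuous_map pointwise_topology euclideanreal N"
    "\<And>x. N (evals x) = norm (blinfun_apply T x)"
proof -
  obtain E :: "'b set" and c
    where E: "finite E" "span E = UNIV" "card E = dim (UNIV :: 'b set)" "biorthogonal E c"
    by (rule finite_dim_biorthogonal_basis[OF assms])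
  define N where "N \<phi> = norm (\<Sum>v\<in>E. \<phi> (c v o\<^sub>L T) *\<^sub>R v)" for \<phi> :: "('a \<Rightarrow>\<^sub>L real) \<Rightarrow> real"
  show thesis
  proof (rule that)
    show "continuous_map pointwise_topology euclideanreal N"
      unfolding N_def
      by (intro continuous_map_norm continuous_map_sum[OF E(1)] continuous_map_scaleR_const
          continuous_map_pointwise_apply)
    fix x
    have "N (evals x) = norm (\<Sum>v\<in>E. blinfun_apply (c v) (blinfun_apply T x) *\<^sub>R v)"
      unfolding N_def evals_def by simp
    also have "(\<Sum>v\<in>E. blinfun_apply (c v) (blinfun_apply T x) *\<^sub>R v) = blinfun_apply T x"
      by (rule biorthogonal_expansion[OF E(1,4), symmetric]) (simp add: E(2))
    finally show "N (evals x) = norm (blinfun_apply T x)" .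
  qed
qed

text \<open>If f in J(T) is positive on g \<otimes> y, then along the direction T + t (g \<otimes> y) the
  norm grows at rate f (g \<otimes> y), which forces almost norming points on which g stays
  away from zero.\<close>

lemma supp_fun_rank_one_perturbation:
  fixes T :: "'a::real_normed_vector \<Rightarrow>\<^sub>L 'b::real_normed_vector"
  assumes "norm T = 1" "f \<in> supp_fun T" "blinfun_apply f (rank_one g y) > 0" "t > 0"
  obtains x where "norm x \<le> 1" "blinfun_apply f (rank_one g y) / 2 < \<bar>blinfun_apply g x\<bar> * norm y"
    "1 - t * (norm g * norm y) \<le> norm (blinfun_apply T x)"
proof -
  define a where "a = blinfun_apply f (rank_one g y)"
  define S where "S = T + t *\<^sub>R rank_one g y"
  have f: "norm f = 1" "blinfun_apply f T = 1"
    using assms(2) unfolding supp_fun_def by auto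
  have "blinfun_apply f S = 1 + t * a"
    unfolding S_def a_def using f by (simp add: blinfun.add_right blinfun.scaleR_right)
  moreover have "blinfun_apply f S \<le> norm S"
    using norm_blinfun[of f S] f(1) by simp
  moreover have "t * a > 0"
    using assms(3,4) unfolding a_def by simp
  ultimately have "1 + t * a / 2 < norm S" by linarith
  then obtain x where x: "norm x \<le> 1" "1 + t * a / 2 < norm (blinfun_apply S x)"
    using exists_unit_ball_norm_apply_gt by blast
  have "blinfun_apply S x = blinfun_apply T x + (t * blinfun_apply g x) *\<^sub>R y"
    unfolding S_def by (simp add: blinfun.add_left blinfun.scaleR_left)
  then have "norm (blinfun_apply S x) \<le> norm (blinfun_apply T x) + t * (\<bar>blinfun_apply g x\<bar> * norm y)"
    using norm_triangle_ineq[of "blinfun_apply T x" "(t * blinfun_apply g x) *\<^sub>R y"] assms(4)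
    by (simp add: abs_mult)
  with x(2) have main: "1 + t * a / 2 < norm (blinfun_apply T x) + t * (\<bar>blinfun_apply g x\<bar> * norm y)"
    by linarith
  have "norm (blinfun_apply T x) \<le> 1"
    using norm_blinfun[of T x] assms(1) x(1) by simp
  with main have "t * (a / 2) < t * (\<bar>blinfun_apply g x\<bar> * norm y)"
    by simp
  then have "a / 2 < \<bar>blinfun_apply g x\<bar> * norm y"
    using assms(4) by simp
  moreover have "\<bar>blinfun_apply g x\<bar> \<le> norm g"
    using norm_blinfun[of g x] mult_left_le[OF x(1), of "norm g"] by simp
  then have "t * (\<bar>blinfun_apply g x\<bar> * norm y) \<le> t * (norm g * norm y)"
    using assms(4) by (simp add: mult_right_mono)
  with main \<open>t * a > 0\<close> have "1 - t * (norm g * norm y) \<le> norm (blinfun_apply T x)"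
    by linarith
  ultimately show thesis
    using that x(1) unfolding a_def by blast
qed

lemma supp_fun_rank_one_pos_near_norming:
  fixes T :: "'a::real_normed_vector \<Rightarrow>\<^sub>L 'b::real_normed_vector"
  assumes "norm T = 1" "f \<in> supp_fun T" "blinfun_apply f (rank_one g y) > 0"
  obtains \<delta> where "\<delta> > 0"
    "\<forall>\<epsilon>>0. \<exists>x. norm x \<le> 1 \<and> 1 - \<epsilon> \<le> norm (blinfun_apply T x) \<and> \<delta> \<le> \<bar>blinfun_apply g x\<bar>"
proof -
  define a where "a = blinfun_apply f (rank_one g y)"
  have "y \<noteq> 0"
  proof
    assume "y = 0"
    then have "rank_one g y = 0" by (intro blinfun_eqI) simp
    then show False using assms(3) by simp
  qed
  then have "norm y > 0" by simp
  have "\<exists>x. norm x \<le> 1 \<and> 1 - \<epsilon> \<le> norm (blinfun_apply T x) \<and>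
      a / (2 * norm y) \<le> \<bar>blinfun_apply g x\<bar>" if "\<epsilon> > 0" for \<epsilon>
  proof -
    define t where "t = \<epsilon> / (norm g * norm y + 1)"
    have "norm g * norm y + 1 > 0"
      by (simp add: add_nonneg_pos)
    then have "t > 0" "t * (norm g * norm y) \<le> \<epsilon>"
      using that unfolding t_def by (simp_all add: field_simps)
    then obtain x where "norm x \<le> 1" "a / 2 < \<bar>blinfun_apply g x\<bar> * norm y"
      "1 - t * (norm g * norm y) \<le> norm (blinfun_apply T x)"
      using supp_fun_rank_one_perturbation[OF assms] unfolding a_def by blast
    then show ?thesis
      using \<open>norm y > 0\<close> \<open>t * (norm g * norm y) \<le> \<epsilon>\<close>
      by (intro exI[of _ x]) (auto simp: field_simps)
  qed
  moreover have "a / (2 * norm y) > 0"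
    using assms(3) \<open>norm y > 0\<close> unfolding a_def by simp
  ultimately show thesis
    using that by blast
qed

lemma weakly_closed_in_ball_decseq_Inter_nonempty:
  fixes C :: "nat \<Rightarrow> 'a::real_normed_vector set"
  assumes refl: "reflexive_space TYPE('a)" and "\<And>n. weakly_closed_in_ball (C n)"
    and "\<And>n. C n \<noteq> {}" and mono: "\<And>k n. k \<le> n \<Longrightarrow> C n \<subseteq> C k"
  shows "\<Inter>(range C) \<noteq> {}"
proof (rule weakly_closed_in_ball_chain_Inter_nonempty[OF refl])
  show "G \<subseteq> H \<or> H \<subseteq> G" if GH: "G \<in> range C" "H \<in> range C" for G H
  proof -
    obtain k n where "G = C k" "H = C n" using GH by blast
    then show ?thesis using mono[of k n] mono[of n k] by (cases "k \<le> n") auto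
  qed
qed (use assms(2,3) in auto)

lemma norm_attaining_point_from_near_norming:
  fixes T :: "'a::real_normed_vector \<Rightarrow>\<^sub>L 'b::real_normed_vector" and g :: "'a \<Rightarrow>\<^sub>L real"
  assumes refl: "reflexive_space TYPE('a)" and "norm T = 1"
    and N: "continuous_map pointwise_topology euclideanreal N"
      "\<And>x. N (evals x) = norm (blinfun_apply T x)"
    and near: "\<forall>\<epsilon>>0.
      \<exists>x. norm x \<le> 1 \<and> 1 - \<epsilon> \<le> norm (blinfun_apply T x) \<and> \<delta> \<le> \<bar>blinfun_apply g x\<bar>"
  obtains x where "x \<in> norm_attaining_set T" "\<delta> \<le> \<bar>blinfun_apply g x\<bar>"
proof -
  define C where "C n = {x \<in> cball (0::'a) 1. N (evals x) \<in> {1 - inverse (real (Suc n))..}} \<inter>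
    {x \<in> cball 0 1. (\<lambda>\<phi>. \<bar>\<phi> g\<bar>) (evals x) \<in> {\<delta>..}}" for n
  have closed: "weakly_closed_in_ball (C n)" for n
    unfolding C_def
    by (intro weakly_closed_in_ball_Int weakly_closed_in_ball_preimage[OF refl] N(1) closed_atLeast
        continuous_map_real_abs continuous_map_pointwise_apply)
  have C_iff: "x \<in> C n \<longleftrightarrow>
      norm x \<le> 1 \<and> 1 - inverse (real (Suc n)) \<le> norm (blinfun_apply T x) \<and> \<delta> \<le> \<bar>blinfun_apply g x\<bar>"
    for x n
    unfolding C_def N(2) by (auto simp: evals_def)
  have C_mono: "C n \<subseteq> C k" if "k \<le> n" for k n
  proof
    fix x assume "x \<in> C n"
    then have x: "norm x \<le> 1" "1 - inverse (real (Suc n)) \<le> norm (blinfun_apply T x)"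
      "\<delta> \<le> \<bar>blinfun_apply g x\<bar>"
      by (simp_all add: C_iff)
    have "inverse (real (Suc n)) \<le> inverse (real (Suc k))"
      using that by (simp add: le_imp_inverse_le)
    with x show "x \<in> C k"
      unfolding C_iff by linarith
  qed
  have C_ne: "C n \<noteq> {}" for n
    using near[rule_format, of "inverse (real (Suc n))"] C_iff by auto
  have "\<Inter>(range C) \<noteq> {}"
    by (rule weakly_closed_in_ball_decseq_Inter_nonempty[OF refl closed C_ne C_mono])
  then obtain x where "\<And>n. x \<in> C n" by blast
  then have x: "norm x \<le> 1" "\<delta> \<le> \<bar>blinfun_apply g x\<bar>"
    and approx: "\<And>n. 1 - inverse (real (Suc n)) \<le> norm (blinfun_apply T x)"
    using C_iff by blast+
  have "1 \<le> norm (blinfun_apply T x)"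
  proof (rule LIMSEQ_le_const2[OF LIMSEQ_inverse_real_of_nat_add_minus])
    show "\<exists>N. \<forall>n\<ge>N. 1 + - inverse (real (Suc n)) \<le> norm (blinfun_apply T x)"
      using approx by simp
  qed
  moreover have "norm (blinfun_apply T x) \<le> norm x"
    using norm_blinfun[of T x] assms(2) by simp
  ultimately have "x \<in> norm_attaining_set T"
    unfolding norm_attaining_set_def using x(1) assms(2) by simp
  then show thesis using x(2) by (rule that)
qed

lemma supp_fun_rank_one_eq_0:
  fixes T :: "'a::real_normed_vector \<Rightarrow>\<^sub>L 'b::real_normed_vector"
  assumes refl: "reflexive_space TYPE('a)" and fin: "\<exists>B::'b set. finite B \<and> span B = UNIV"
    and "norm T = 1" "finite X"
    and ext: "norm_attaining_set T \<inter> {e. e extreme_point_of cball 0 1} \<subseteq> span X"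
    and f: "f \<in> supp_fun T" and g: "\<And>v. v \<in> span X \<Longrightarrow> blinfun_apply g v = 0"
  shows "blinfun_apply f (rank_one g y) = 0"
proof -
  obtain N where N: "continuous_map pointwise_topology euclideanreal N"
    "\<And>x. N (evals x) = norm (blinfun_apply T x)"
    by (rule weakly_continuous_norm_apply[OF fin, where T=T]) auto
  have not_pos: "\<not> blinfun_apply f (rank_one g z) > 0" for z
  proof
    assume "blinfun_apply f (rank_one g z) > 0"
    then obtain \<delta> where "\<delta> > 0" and near: "\<forall>\<epsilon>>0.
        \<exists>x. norm x \<le> 1 \<and> 1 - \<epsilon> \<le> norm (blinfun_apply T x) \<and> \<delta> \<le> \<bar>blinfun_apply g x\<bar>"
      by (rule supp_fun_rank_one_pos_near_norming[OF assms(3) f])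
    obtain x where "x \<in> norm_attaining_set T" "\<delta> \<le> \<bar>blinfun_apply g x\<bar>"
      by (rule norm_attaining_point_from_near_norming[OF refl assms(3) N near])
    moreover have "x \<in> span X"
      using norm_attaining_set_subset_span[OF refl assms(3,4) ext] calculation(1) by blast
    ultimately show False
      using g \<open>\<delta> > 0\<close> by fastforce
  qed
  have "blinfun_apply f (rank_one g (- y)) = - blinfun_apply f (rank_one g y)"
    by (simp add: rank_one_uminus_right blinfun.minus_right)
  then show ?thesis
    using not_pos[of y] not_pos[of "- y"] by linarith
qed

lemma blinfun_eq_sum_rank_one:
  fixes S :: "'a::real_normed_vector \<Rightarrow>\<^sub>L 'b::real_normed_vector"
  assumes "finite E" "biorthogonal E c" "span E = UNIV"
  shows "S = (\<Sum>v\<in>E. rank_one (c v o\<^sub>L S) v)"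
proof (rule blinfun_eqI)
  fix z
  have "blinfun_apply S z = (\<Sum>v\<in>E. blinfun_apply (c v) (blinfun_apply S z) *\<^sub>R v)"
    by (rule biorthogonal_expansion[OF assms(1,2)]) (simp add: assms(3))
  then show "blinfun_apply S z = blinfun_apply (\<Sum>v\<in>E. rank_one (c v o\<^sub>L S) v) z"
    by (simp add: blinfun.sum_left)
qed

lemma supp_fun_rank_one_expansion:
  fixes T :: "'a::real_normed_vector \<Rightarrow>\<^sub>L 'b::real_normed_vector"
  assumes refl: "reflexive_space TYPE('a)" and fin: "\<exists>B::'b set. finite B \<and> span B = UNIV"
    and "norm T = 1" "finite X" "biorthogonal X gd"
    and ext: "norm_attaining_set T \<inter> {e. e extreme_point_of cball 0 1} \<subseteq> span X"
    and f: "f \<in> supp_fun T"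
  shows "blinfun_apply f (rank_one h v) =
    (\<Sum>u\<in>X. blinfun_apply h u * blinfun_apply f (rank_one (gd u) v))"
proof -
  define k where "k = h - (\<Sum>u\<in>X. blinfun_apply h u *\<^sub>R gd u)"
  have "blinfun_apply k w = 0" if "w \<in> span X" for w
  proof (rule linear_eq_0_on_span[OF linear_blinfun_apply _ that])
    fix w assume "w \<in> X"
    have "(\<Sum>u\<in>X. blinfun_apply h u * blinfun_apply (gd u) w) =
        (\<Sum>u\<in>X. if u = w then blinfun_apply h u else 0)"
      using assms(5) \<open>w \<in> X\<close> unfolding biorthogonal_def by (intro sum.cong) auto
    also have "\<dots> = blinfun_apply h w"
      using assms(4) \<open>w \<in> X\<close> by simp
    finally show "blinfun_apply k w = 0"
      unfolding k_def by (simp add: blinfun.diff_left blinfun.sum_left blinfun.scaleR_left)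
  qed
  then have "blinfun_apply f (rank_one k v) = 0"
    by (intro supp_fun_rank_one_eq_0[OF refl fin assms(3,4) ext f])
  moreover have "rank_one h v = (\<Sum>u\<in>X. blinfun_apply h u *\<^sub>R rank_one (gd u) v) + rank_one k v"
  proof (rule blinfun_eqI)
    fix z
    have kz: "blinfun_apply k z = blinfun_apply h z - (\<Sum>u\<in>X. blinfun_apply h u * blinfun_apply (gd u) z)"
      unfolding k_def by (simp add: blinfun.diff_left blinfun.sum_left blinfun.scaleR_left)
    have "blinfun_apply ((\<Sum>u\<in>X. blinfun_apply h u *\<^sub>R rank_one (gd u) v) + rank_one k v) z
        = (\<Sum>u\<in>X. blinfun_apply h u * blinfun_apply (gd u) z) *\<^sub>R v + blinfun_apply k z *\<^sub>R v"
      by (simp add: blinfun.add_left blinfun.sum_left blinfun.scaleR_left scaleR_sum_left)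
    also have "\<dots> = blinfun_apply h z *\<^sub>R v"
      unfolding kz by (simp add: scaleR_diff_left)
    finally show "blinfun_apply (rank_one h v) z =
        blinfun_apply ((\<Sum>u\<in>X. blinfun_apply h u *\<^sub>R rank_one (gd u) v) + rank_one k v) z"
      by simp
  qed
  ultimately show ?thesis
    by (simp add: blinfun.add_right blinfun.sum_right blinfun.scaleR_right)
qed

lemma supp_fun_expansion:
  fixes T :: "'a::real_normed_vector \<Rightarrow>\<^sub>L 'b::real_normed_vector"
  assumes refl: "reflexive_space TYPE('a)" and fin: "\<exists>B::'b set. finite B \<and> span B = UNIV"
    and "norm T = 1" "finite X" "biorthogonal X gd"
    and ext: "norm_attaining_set T \<inter> {e. e extreme_point_of cball 0 1} \<subseteq> span X"
    and E: "finite E" "biorthogonal E c" "span E = UNIV"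
    and f: "f \<in> supp_fun T"
  shows "f = (\<Sum>(u, v)\<in>X \<times> E. blinfun_apply f (rank_one (gd u) v) *\<^sub>R eval_functional u (c v))"
proof (rule blinfun_eqI)
  fix S :: "'a \<Rightarrow>\<^sub>L 'b"
  have "blinfun_apply f S = (\<Sum>v\<in>E. blinfun_apply f (rank_one (c v o\<^sub>L S) v))"
    by (subst blinfun_eq_sum_rank_one[OF E]) (simp add: blinfun.sum_right)
  also have "\<dots> = (\<Sum>v\<in>E. \<Sum>u\<in>X.
      blinfun_apply (c v o\<^sub>L S) u * blinfun_apply f (rank_one (gd u) v))"
    by (rule sum.cong[OF HOL.refl], rule supp_fun_rank_one_expansion[OF refl fin assms(3-5) ext f])
  also have "\<dots> = (\<Sum>(u, v)\<in>X \<times> E.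
      blinfun_apply (c v) (blinfun_apply S u) * blinfun_apply f (rank_one (gd u) v))"
    by (subst sum.swap) (simp add: sum.cartesian_product)
  also have "\<dots> = blinfun_apply
      (\<Sum>(u, v)\<in>X \<times> E. blinfun_apply f (rank_one (gd u) v) *\<^sub>R eval_functional u (c v)) S"
    by (simp add: blinfun.sum_left blinfun.scaleR_left case_prod_beta mult.commute)
  finally show "blinfun_apply f S = blinfun_apply
      (\<Sum>(u, v)\<in>X \<times> E. blinfun_apply f (rank_one (gd u) v) *\<^sub>R eval_functional u (c v)) S" .
qed

lemma eval_functional_in_supp_fun:
  fixes T :: "'a::real_normed_vector \<Rightarrow>\<^sub>L 'b::real_normed_vector"
  assumes "norm T = 1" "norm u = 1" "\<phi> \<in> supp_fun (blinfun_apply T u)"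
  shows "eval_functional u \<phi> \<in> supp_fun T"
proof -
  have \<phi>: "norm \<phi> = 1" "blinfun_apply \<phi> (blinfun_apply T u) = 1"
    using assms(3) unfolding supp_fun_def by auto
  have "norm (eval_functional u \<phi>) \<le> 1"
    using norm_eval_functional_le[of u \<phi>] \<phi>(1) assms(2) by simp
  moreover have "1 \<le> norm (eval_functional u \<phi>)"
    using norm_blinfun[of "eval_functional u \<phi>" T] \<phi>(2) assms(1) by simp
  ultimately show ?thesis
    unfolding supp_fun_def using \<phi>(2) by simp
qed

lemma biorthogonal_dual_spanning:
  fixes E :: "'b::real_normed_vector set"
  assumes E: "finite E" "biorthogonal E c" "span E = UNIV"
  shows "\<phi> \<in> span (c ` E)"
proof -
  have "\<phi> = (\<Sum>v\<in>E. blinfun_apply \<phi> v *\<^sub>R c v)"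
  proof (rule blinfun_eqI)
    fix y
    have "y = (\<Sum>v\<in>E. blinfun_apply (c v) y *\<^sub>R v)"
      by (rule biorthogonal_expansion[OF E(1,2)]) (simp add: E(3))
    then have "blinfun_apply \<phi> y = blinfun_apply \<phi> (\<Sum>v\<in>E. blinfun_apply (c v) y *\<^sub>R v)"
      by (rule arg_cong)
    then show "blinfun_apply \<phi> y = blinfun_apply (\<Sum>v\<in>E. blinfun_apply \<phi> v *\<^sub>R c v) y"
      by (simp add: blinfun.sum_right blinfun.sum_left blinfun.scaleR_right blinfun.scaleR_left
          mult.commute)
  qed
  also have "\<dots> \<in> span (c ` E)"
    by (intro span_sum span_scale span_base) simp
  finally show ?thesis .
qed

lemma span_supp_fun_eq_UNIV:
  fixes z :: "'b::real_normed_vector" and E :: "'b set"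
  assumes E: "finite E" "biorthogonal E c" "span E = UNIV" and "k_smooth z (card E)"
  shows "span (supp_fun z) = UNIV"
proof -
  let ?J = "supp_fun z"
  note dual = biorthogonal_dual_spanning[OF E]
  obtain B where B: "B \<subseteq> ?J" "independent B" "?J \<subseteq> span B" "card B = dim ?J"
    by (rule basis_exists)
  have "\<psi> \<in> span B" for \<psi>
  proof (rule ccontr)
    assume "\<psi> \<notin> span B"
    then have "independent (insert \<psi> B)"
      using B(2) by (rule independent_insertI)
    moreover have "insert \<psi> B \<subseteq> span (c ` E)"
      using dual by blast
    ultimately have bound: "finite (insert \<psi> B) \<and> card (insert \<psi> B) \<le> card (c ` E)"
      by (intro independent_span_bound finite_imageI E(1))
    moreover have "\<psi> \<notin> B"
      using \<open>\<psi> \<notin> span B\<close> span_base by blast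
    ultimately have "Suc (card B) \<le> card (c ` E)"
      using card_insert_disjoint[of B \<psi>] by auto
    also have "\<dots> \<le> card E"
      using E(1) by (rule card_image_le)
    also have "\<dots> = card B"
      using assms(4) B(4) unfolding k_smooth_def by simp
    finally show False by simp
  qed
  moreover have "span B \<subseteq> span ?J"
    using B(1) by (rule span_mono)
  ultimately show ?thesis
    by auto
qed

lemma independent_image_biorthogonal:
  fixes G :: "'p \<Rightarrow> 'v::real_vector" and \<Lambda> :: "'p \<Rightarrow> 'v \<Rightarrow> real"
  assumes lin: "\<And>p. linear (\<Lambda> p)"
    and d: "\<And>p q. p \<in> P \<Longrightarrow> q \<in> P \<Longrightarrow> \<Lambda> p (G q) = (if q = p then 1 else 0)"
  shows "independent (G ` P)" "inj_on G P"
proof -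
  show "inj_on G P"
  proof (rule inj_onI)
    fix p q assume pq: "p \<in> P" "q \<in> P" "G p = G q"
    then have "\<Lambda> p (G q) = 1" using d[OF pq(1) pq(1)] by simp
    then show "p = q" using d[OF pq(1,2)] by (auto split: if_splits)
  qed
  show "independent (G ` P)"
  proof
    assume "dependent (G ` P)"
    then obtain p where p: "p \<in> P" "G p \<in> span (G ` P - {G p})"
      unfolding dependent_def by blast
    have "\<Lambda> p (G p) = 0"
    proof (rule linear_eq_0_on_span[OF lin _ p(2)])
      fix w assume "w \<in> G ` P - {G p}"
      then obtain q where "q \<in> P" "w = G q" "q \<noteq> p" by blast
      then show "\<Lambda> p w = 0" using d[OF p(1)] by simp
    qed
    then show False using d[OF p(1) p(1)] by simp
  qed
qed

lemma independent_eval_functionals: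
  assumes "biorthogonal X gd" "biorthogonal E c"
  shows "independent ((\<lambda>(u, v). eval_functional u (c v)) ` (X \<times> E))"
    "inj_on (\<lambda>(u, v). eval_functional u (c v)) (X \<times> E)"
proof -
  define \<Lambda> where "\<Lambda> p F = blinfun_apply F (rank_one (gd (fst p)) (snd p))"
    for p and F :: "('a \<Rightarrow>\<^sub>L 'b) \<Rightarrow>\<^sub>L real"
  have lin: "linear (\<Lambda> p)" for p
    unfolding \<Lambda>_def by (rule bounded_linear.linear[OF blinfun.bounded_linear_left])
  have d: "\<Lambda> p ((\<lambda>(u, v). eval_functional u (c v)) q) = (if q = p then 1 else 0)"
    if "p \<in> X \<times> E" "q \<in> X \<times> E" for p q
    using assms that unfolding \<Lambda>_def biorthogonal_def
    by (cases p, cases q) (auto simp: blinfun.scaleR_right)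
  from independent_image_biorthogonal[OF lin d]
  show "independent ((\<lambda>(u, v). eval_functional u (c v)) ` (X \<times> E))"
    "inj_on (\<lambda>(u, v). eval_functional u (c v)) (X \<times> E)"
    by auto
qed

lemma dim_eval_functionals:
  assumes "biorthogonal X gd" "biorthogonal E c"
  shows "dim ((\<lambda>(u, v). eval_functional u (c v)) ` (X \<times> E)) = card X * card E"
proof -
  have "dim ((\<lambda>(u, v). eval_functional u (c v)) ` (X \<times> E))
      = card ((\<lambda>(u, v). eval_functional u (c v)) ` (X \<times> E))"
    using independent_eval_functionals(1)[OF assms] by (rule dim_eq_card_independent)
  also have "\<dots> = card (X \<times> E)"
    using independent_eval_functionals(2)[OF assms] by (rule card_image)
  finally show ?thesis
    by (simp add: card_cartesian_product)
qed

lemma span_supp_fun_eq_span_eval_functionals: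
  fixes T :: "'a::real_normed_vector \<Rightarrow>\<^sub>L 'b::real_normed_vector"
  assumes refl: "reflexive_space TYPE('a)" and fin: "\<exists>B::'b set. finite B \<and> span B = UNIV"
    and "norm T = 1" "finite X" "biorthogonal X gd" "X \<subseteq> norm_attaining_set T"
    and ext: "norm_attaining_set T \<inter> {e. e extreme_point_of cball 0 1} \<subseteq> span X"
    and E: "finite E" "biorthogonal E c" "span E = UNIV"
    and smooth: "\<And>u. u \<in> X \<Longrightarrow> k_smooth (blinfun_apply T u) (card E)"
  shows "span (supp_fun T) = span ((\<lambda>(u, v). eval_functional u (c v)) ` (X \<times> E))"
  unfolding span_eq
proof
  show "supp_fun T \<subseteq> span ((\<lambda>(u, v). eval_functional u (c v)) ` (X \<times> E))"
  proof
    fix f assume "f \<in> supp_fun T"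
    then have "f = (\<Sum>(u, v)\<in>X \<times> E.
        blinfun_apply f (rank_one (gd u) v) *\<^sub>R eval_functional u (c v))"
      by (rule supp_fun_expansion[OF refl fin assms(3-5) ext E])
    also have "\<dots> \<in> span ((\<lambda>(u, v). eval_functional u (c v)) ` (X \<times> E))"
    proof (rule span_sum)
      fix p assume "p \<in> X \<times> E"
      then obtain u v where "p = (u, v)" "u \<in> X" "v \<in> E" by blast
      then have "eval_functional u (c v) \<in> (\<lambda>(u, v). eval_functional u (c v)) ` (X \<times> E)"
        by (intro rev_image_eqI[of "(u, v)"]) auto
      then have "eval_functional u (c v) \<in> span ((\<lambda>(u, v). eval_functional u (c v)) ` (X \<times> E))"
        by (rule span_base)
      then show "(case p of (u, v) \<Rightarrow> blinfun_apply f (rank_one (gd u) v) *\<^sub>R eval_functional u (c v))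
          \<in> span ((\<lambda>(u, v). eval_functional u (c v)) ` (X \<times> E))"
        unfolding \<open>p = (u, v)\<close> by (simp add: span_scale)
    qed
    finally show "f \<in> span ((\<lambda>(u, v). eval_functional u (c v)) ` (X \<times> E))" .
  qed
  show "(\<lambda>(u, v). eval_functional u (c v)) ` (X \<times> E) \<subseteq> span (supp_fun T)"
  proof clarify
    fix u v assume "u \<in> X" "v \<in> E"
    then have "norm u = 1"
      using assms(6) unfolding norm_attaining_set_def by auto
    have "c v \<in> span (supp_fun (blinfun_apply T u))"
      using span_supp_fun_eq_UNIV[OF E smooth[OF \<open>u \<in> X\<close>]] by simp
    then have "eval_functional u (c v) \<in> span (eval_functional u ` supp_fun (blinfun_apply T u))"
      using span_linear_image[OF linear_eval_functional] by blast
    also have "\<dots> \<subseteq> span (supp_fun T)"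
      using eval_functional_in_supp_fun[OF assms(3) \<open>norm u = 1\<close>] by (intro span_mono) blast
    finally show "eval_functional u (c v) \<in> span (supp_fun T)" .
  qed
qed

theorem theorem3p5:
  fixes T :: "'a::banach \<Rightarrow>\<^sub>L 'b::banach"
    and x :: "nat \<Rightarrow> 'a" and r m :: nat
  assumes "reflexive_space TYPE('a)"
    and "\<exists>B::'b set. finite B \<and> span B = UNIV"
    and "dim (UNIV :: 'b set) = m"
    and "norm T = 1"
    and "inj_on x {..<r}"
    and "independent (x ` {..<r})"
    and "x ` {..<r} \<subseteq> norm_attaining_set T \<inter> {e. e extreme_point_of cball 0 1}"
    and "norm_attaining_set T \<inter> {e. e extreme_point_of cball 0 1} \<subseteq> span (x ` {..<r})"
    and "\<forall>i<r. k_smooth (blinfun_apply T (x i)) m"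
  shows "k_smooth T (m * r)"
proof -
  obtain E :: "'b set" and c
    where E: "finite E" "span E = UNIV" "card E = dim (UNIV :: 'b set)" "biorthogonal E c"
    by (rule finite_dim_biorthogonal_basis[OF assms(2)])
  define X where "X = x ` {..<r}"
  have X: "finite X" "card X = r"
    unfolding X_def using card_image[OF assms(5)] by auto
  obtain gd where gd: "biorthogonal X gd"
    using biorthogonal_exists[OF X(1) assms(6)[folded X_def]] by blast
  let ?P = "\<lambda>(u, v). eval_functional u (c v)"
  have span: "span (supp_fun T) = span (?P ` (X \<times> E))"
  proof (rule span_supp_fun_eq_span_eval_functionals[OF assms(1,2,4) X(1) gd _ _ E(1,4,2)])
    show "X \<subseteq> norm_attaining_set T" "norm_attaining_set T \<inter> {e. e extreme_point_of cball 0 1} \<subseteq> span X"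
      using assms(7,8) unfolding X_def by auto
    show "k_smooth (blinfun_apply T u) (card E)" if "u \<in> X" for u
      using assms(9) that E(3) assms(3) unfolding X_def by auto
  qed
  have "dim (supp_fun T) = m * r"
    using span_eq_dim[OF span] dim_eval_functionals[OF gd E(4)] X(2) E(3) assms(3)
    by (simp add: mult.commute)
  moreover have "finite (?P ` (X \<times> E))"
    using X(1) E(1) by simp
  ultimately show ?thesis
    unfolding k_smooth_def using assms(4) span by auto
qed

end
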